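(* Let $p,q$ be positive integers with $p+q$ odd. For every $n\ge2$, $$|\mathcal{J}^{p,q}_n|=\frac{2\,|\mathcal{J}^{p,q}_{n-1}|^2}{|D_{2^{\lfloor (n-1)/2\rfloor+1}}|}.$$
   Context: Let $p,q$ be positive integers with $p+q$ odd. $\mathbb{Z}_{2^k}$ denotes the integers modulo $2^k$ ($\mathbb{Z}_1$ trivial); as $p+q$ is odd, division by $p+q$ and $(p+q)^2$ is well defined in $\mathbb{Z}_{2^k}$. For $m\ge1$, $D_{2m}$ is the dihedral group of order $2m$, realized as pairs $(f,x)$, $f\in\mathbb{Z}_2$, $x\in\mathbb{Z}_m$, with product $(f_1,x_1)(f_2,x_2)=(f_1+f_2,x_1+(-1)^{f_1}x_2)$. Define $\Phi:D_{2m}\to D_{2m}$, $\Phi((f,x))=(f,\delta(f=1)(p+q)(p-q)-x)$, where $\delta(f=1)$ is $1$ if $f=1$ and $0$ otherwise. $\mathrm{Aut}(T_1)$ is trivial; for $k\ge1$, $\mathrm{Aut}(T_{k+1})$ is the set of triples $g=(g_f,g_L,g_R)$, $g_f\in\mathbb{Z}_2$, $g_L,g_R\in\mathrm{Aut}(T_k)$, with product $(f,A,B)(g,C,D)=(f+g,AC,BD)$ if $f=0$ and $(f+g,AD,BC)$ if $f=1$; subscripts chain ($g_{LR}=(g_L)_R$, $g_{Lf}=(g_L)_f$). Recursively: $\mathcal{J}_1=\mathrm{Aut}(T_2)$, $\psi_1=0$, $\Delta_1(g)=(g_f,0)$; $\mathcal{J}_2=\{g\in\mathrm{Aut}(T_3):g_L=g_R\}$,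 $\psi_2(g)=\delta(g_{Lf}=1)\in\mathbb{Z}_2$, $\Delta_2(g)=(g_f,\psi_2(g))$; for $n\ge3$, $\mathcal{J}_n=\{g\in\mathrm{Aut}(T_{n+1}):g_L,g_R\in\mathcal{J}_{n-1},\ \Delta_{n-1}(g_L)=\Phi(\Delta_{n-1}(g_R))\}$, with $\psi_n:\mathcal{J}_n\to\mathbb{Z}_{2^{\lfloor n/2\rfloor}}$ given by $\psi_n(g)=(\psi_{n-1}(g_L)+\psi_{n-1}(g_R))/(p+q)$ for odd $n$ and $\psi_n(g)=\big(2(\psi_{n-2}(g_{LL})+\psi_{n-2}(g_{RL}))-\delta(g_{Lf}=1)(p+q)(p-q)\big)/(p+q)^2$ for even $n$ (with $2\psi_{n-2}(\cdot)$ read in $\mathbb{Z}_{2^{n/2}}$), and $\Delta_n:\mathcal{J}_n\to D_{2^{\lfloor n/2\rfloor+1}}$ given by $\Delta_n(g)=(g_f,\psi_{n-1}(g_L)-\psi_{n-1}(g_R))$ for odd $n$ and $\Delta_n(g)=(g_f,(p+q)\psi_n(g)-2\psi_{n-1}(g_R))$ for even $n$. *)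

theory Defs
  imports "HOL-Number_Theory.Number_Theory"
begin

text \<open>Elements of Aut(T_k): Leaf is the unique element of Aut(T_1);
  Node f L R is the triple (g_f, g_L, g_R); g_f in Z_2 is encoded as a bool
  (True means 1).\<close>
datatype aut = Leaf | Node (fl: bool) (lft: aut) (rgt: aut)

fun autset :: "nat \<Rightarrow> aut set" where
  "autset 0 = {}"
| "autset (Suc 0) = {Leaf}"
| "autset (Suc (Suc k)) =
     {Node f a b | f a b. a \<in> autset (Suc k) \<and> b \<in> autset (Suc k)}"

text \<open>Elements of Z_(2^k) are represented by integers in {0..<2^k}.
  zdivm k a b is a / b in Z_(2^k) (b odd).\<close>
definition zdivm :: "nat \<Rightarrow> int \<Rightarrow> int \<Rightarrow> int" where
  "zdivm k a b = (THE x. 0 \<le> x \<and> x < 2 ^ k \<and> [b * x = a] (mod 2 ^ k))"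

text \<open>Dihedral group D_(2m) realized as pairs (f,x), f in Z_2 (bool), x in Z_m.\<close>
definition dihedral :: "nat \<Rightarrow> (bool \<times> int) set" where
  "dihedral m = UNIV \<times> {0..<int m}"

definition Phi :: "int \<Rightarrow> int \<Rightarrow> nat \<Rightarrow> bool \<times> int \<Rightarrow> bool \<times> int" where
  "Phi p q k d = (fst d, ((if fst d then (p + q) * (p - q) else 0) - snd d) mod 2 ^ k)"

fun psi :: "int \<Rightarrow> int \<Rightarrow> nat \<Rightarrow> aut \<Rightarrow> int" where
  "psi p q 0 g = 0"
| "psi p q (Suc 0) g = 0"
| "psi p q (Suc (Suc 0)) g = (if fl (lft g) then 1 else 0)"
| "psi p q (Suc (Suc (Suc n))) g =
     (if odd (Suc (Suc (Suc n))) then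
        zdivm (Suc (Suc (Suc n)) div 2)
          (psi p q (Suc (Suc n)) (lft g) + psi p q (Suc (Suc n)) (rgt g)) (p + q)
      else
        zdivm (Suc (Suc (Suc n)) div 2)
          (2 * (psi p q (Suc n) (lft (lft g)) + psi p q (Suc n) (lft (rgt g)))
           - (if fl (lft g) then (p + q) * (p - q) else 0)) ((p + q) ^ 2))"

fun Delta :: "int \<Rightarrow> int \<Rightarrow> nat \<Rightarrow> aut \<Rightarrow> bool \<times> int" where
  "Delta p q 0 g = (fl g, 0)"
| "Delta p q (Suc 0) g = (fl g, 0)"
| "Delta p q (Suc (Suc 0)) g = (fl g, psi p q 2 g)"
| "Delta p q (Suc (Suc (Suc n))) g =
     (if odd (Suc (Suc (Suc n))) then
        (fl g, (psi p q (Suc (Suc n)) (lft g) - psi p q (Suc (Suc n)) (rgt g))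
                 mod 2 ^ (Suc (Suc (Suc n)) div 2))
      else
        (fl g, ((p + q) * psi p q (Suc (Suc (Suc n))) g - 2 * psi p q (Suc (Suc n)) (rgt g))
                 mod 2 ^ (Suc (Suc (Suc n)) div 2)))"

fun J :: "int \<Rightarrow> int \<Rightarrow> nat \<Rightarrow> aut set" where
  "J p q 0 = {}"
| "J p q (Suc 0) = autset 2"
| "J p q (Suc (Suc 0)) = {g \<in> autset 3. lft g = rgt g}"
| "J p q (Suc (Suc (Suc n))) =
     {g \<in> autset (n + 4). lft g \<in> J p q (n + 2) \<and> rgt g \<in> J p q (n + 2) \<and>
        Delta p q (n + 2) (lft g) = Phi p q ((n + 2) div 2) (Delta p q (n + 2) (rgt g))}"

end

(*
  Delta_m has fibres of constant size c on J_m, as a map onto the dihedral group D of order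
  2^(floor(m/2)+1).  An element of J_(m+1) is a bit g_f together with a pair (a, b) of elements
  of J_m with Delta_m a = Phi (Delta_m b); as Phi maps D into D, there are 2 |J_m| c of them,
  while |J_m| = |D| c.

  Constancy of the fibres of Delta is proved for a finer invariant, by induction on the level:
  at level 2i+2 the data (g_f, psi g, psi g_R) in Z_2 x Z_(2^(i+1)) x Z_(2^i), at level 2i+3 the
  data (g_f, psi g_L, psi g_R) in Z_2 x Z_(2^(i+1)) x Z_(2^(i+1)).  The data of a glued element is
  an explicit function of the data of its two halves, and every value of it has the same number
  of compatible preimages: since p + q is odd, the value forces the parity bits of the halves and
  leaves exactly one residue free.
*)

theory Submission
  imports Defs
begin

section \<open>Division by odd numbers modulo powers of two\<close>

lemma ex1_zdivm:
  fixes b :: int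
  assumes "odd b"
  shows "\<exists>!x. 0 \<le> x \<and> x < 2 ^ k \<and> [b * x = a] (mod 2 ^ k)"
proof -
  have coprime: "coprime b (2 ^ k)"
    using assms by simp
  obtain y where y: "[b * y = 1] (mod 2 ^ k)"
    using cong_solve_coprime_int[OF coprime] by blast
  define x0 where "x0 = (y * a) mod 2 ^ k"
  have "[b * x0 = a] (mod 2 ^ k)"
    using cong_scalar_right[OF y, of a] by (simp add: x0_def cong_def mod_mult_right_eq ac_simps)
  moreover have "0 \<le> x0" "x0 < 2 ^ k"
    by (simp_all add: x0_def)
  moreover have "x = x'"
    if "0 \<le> x" "x < 2 ^ k" "[b * x = a] (mod 2 ^ k)"
      and "0 \<le> x'" "x' < 2 ^ k" "[b * x' = a] (mod 2 ^ k)" for x x'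
  proof -
    have "[b * x = b * x'] (mod 2 ^ k)"
      using that by (meson cong_sym cong_trans)
    then show ?thesis
      using that cong_less_imp_eq_int cong_mult_lcancel[OF coprime] by blast
  qed
  ultimately show ?thesis
    by blast
qed

lemma zdivm_eq_iff:
  assumes "odd b"
  shows "zdivm k a b = x \<longleftrightarrow> 0 \<le> x \<and> x < 2 ^ k \<and> 2 ^ k dvd b * x - a"
  using the1_equality[OF ex1_zdivm[OF assms]] theI'[OF ex1_zdivm[OF assms]]
  unfolding zdivm_def cong_iff_dvd_diff by blast

lemma zdivm_bounds:
  assumes "odd b"
  shows "0 \<le> zdivm k a b" and "zdivm k a b < 2 ^ k"
  using zdivm_eq_iff[OF assms, of k a "zdivm k a b"] by simp_all

lemma mod_eq_iff_dvd:
  fixes r d M :: int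
  assumes "0 < M"
  shows "r mod M = d \<longleftrightarrow> 0 \<le> d \<and> d < M \<and> M dvd r - d"
  using assms mod_eq_dvd_iff[of r M d] by (auto simp: mod_pos_pos_trivial)

lemma double_dvd_diff_double_iff:
  fixes K a b :: int
  shows "2 * K dvd a - 2 * b \<longleftrightarrow> even a \<and> K dvd a div 2 - b"
proof (cases "even a")
  case True
  then have "a - 2 * b = 2 * (a div 2 - b)"
    by simp
  then show ?thesis
    using True by (metis dvd_mult_cancel_left zero_neq_numeral)
next
  case False
  have "\<not> 2 * K dvd a - 2 * b"
  proof
    assume "2 * K dvd a - 2 * b"
    then have "2 dvd a - 2 * b"
      using dvd_mult_left by blast
    with False show False
      by simp
  qed
  with False show ?thesis
    by simp
qed

lemma Phi_eq_iff_dvd: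
  "(h1, A mod 2 ^ k) = Phi p q k (h2, B mod 2 ^ k) \<longleftrightarrow>
     h1 = h2 \<and> 2 ^ k dvd A + B - (if h2 then (p + q) * (p - q) else 0)"
proof -
  have "A mod 2 ^ k = ((if h2 then (p + q) * (p - q) else 0) - B mod 2 ^ k) mod 2 ^ k
      \<longleftrightarrow> 2 ^ k dvd A - ((if h2 then (p + q) * (p - q) else 0) - B)"
    by (simp add: mod_diff_right_eq mod_eq_dvd_iff)
  then show ?thesis
    unfolding Phi_def by (auto simp: algebra_simps)
qed

section \<open>Maps with fibres of constant size\<close>

definition uniform_fibres :: "('a \<Rightarrow> 'b) \<Rightarrow> 'a set \<Rightarrow> 'b set \<Rightarrow> nat \<Rightarrow> bool" where
  "uniform_fibres \<phi> A S c \<longleftrightarrow> \<phi> ` A \<subseteq> S \<and> (\<forall>y\<in>S. card {x \<in> A. \<phi> x = y} = c)"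

lemma uniform_fibres_card:
  assumes "uniform_fibres \<phi> A S c" and "finite A" and "finite S"
  shows "card A = card S * c"
proof -
  have "A = (\<Union>y\<in>S. {x \<in> A. \<phi> x = y})"
    using assms(1) unfolding uniform_fibres_def by auto
  also have "card \<dots> = (\<Sum>y\<in>S. card {x \<in> A. \<phi> x = y})"
    using assms(2,3) by (intro card_UN_disjoint) auto
  also have "\<dots> = card S * c"
    using assms(1) unfolding uniform_fibres_def by simp
  finally show ?thesis .
qed

lemma uniform_fibres_comp_restrict:
  assumes \<Theta>: "uniform_fibres \<Theta> A S c" and "finite A" and "finite S"
    and image: "\<psi> ` {s \<in> S. P s} \<subseteq> T"
    and fibres: "\<And>y. y \<in> T \<Longrightarrow> card {s \<in> S. P s \<and> \<psi> s = y} = k"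
  shows "uniform_fibres (\<lambda>x. \<psi> (\<Theta> x)) {x \<in> A. P (\<Theta> x)} T (c * k)"
  unfolding uniform_fibres_def
proof (intro conjI ballI)
  show "(\<lambda>x. \<psi> (\<Theta> x)) ` {x \<in> A. P (\<Theta> x)} \<subseteq> T"
    using \<Theta> image unfolding uniform_fibres_def by auto
next
  fix y
  assume "y \<in> T"
  have "{x \<in> {x \<in> A. P (\<Theta> x)}. \<psi> (\<Theta> x) = y} =
      (\<Union>s\<in>{s \<in> S. P s \<and> \<psi> s = y}. {x \<in> A. \<Theta> x = s})"
    using \<Theta> unfolding uniform_fibres_def by auto
  also have "card \<dots> = (\<Sum>s\<in>{s \<in> S. P s \<and> \<psi> s = y}. card {x \<in> A. \<Theta> x = s})"
    using assms(2,3) by (intro card_UN_disjoint) auto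
  also have "\<dots> = c * k"
    using \<Theta> fibres[OF \<open>y \<in> T\<close>] unfolding uniform_fibres_def by simp
  finally show "card {x \<in> {x \<in> A. P (\<Theta> x)}. \<psi> (\<Theta> x) = y} = c * k" .
qed

lemma uniform_fibres_comp:
  assumes "uniform_fibres \<Theta> A S c" and "finite A" and "finite S"
    and "\<psi> ` S \<subseteq> T" and "\<And>y. y \<in> T \<Longrightarrow> card {s \<in> S. \<psi> s = y} = k"
  shows "uniform_fibres (\<lambda>x. \<psi> (\<Theta> x)) A T (c * k)"
  using uniform_fibres_comp_restrict[OF assms(1-3), of \<psi> "\<lambda>_. True" T k] assms(4,5) by simp

lemma uniform_fibres_cong:
  assumes "uniform_fibres \<phi> A S c" and "\<And>x. x \<in> A \<Longrightarrow> \<phi> x = \<phi>' x"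
  shows "uniform_fibres \<phi>' A S c"
proof -
  have "{x \<in> A. \<phi> x = y} = {x \<in> A. \<phi>' x = y}" for y
    using assms(2) by auto
  then show ?thesis
    using assms unfolding uniform_fibres_def by auto
qed

lemma uniform_fibres_image:
  assumes "inj_on N A" and "uniform_fibres (\<lambda>x. \<phi> (N x)) A S c"
  shows "uniform_fibres \<phi> (N ` A) S c"
proof -
  have "{z \<in> N ` A. \<phi> z = y} = N ` {x \<in> A. \<phi> (N x) = y}" for y
    by auto
  moreover have "card (N ` {x \<in> A. \<phi> (N x) = y}) = card {x \<in> A. \<phi> (N x) = y}" for y
    using assms(1) by (auto intro: card_image inj_on_subset)
  ultimately show ?thesis
    using assms(2) unfolding uniform_fibres_def by auto
qed

lemma uniform_fibres_map_prod:
  assumes "uniform_fibres \<Theta> A S c"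
  shows "uniform_fibres (\<lambda>(f, a, b). (f, \<Theta> a, \<Theta> b)) (UNIV \<times> A \<times> A) (UNIV \<times> S \<times> S) (c * c)"
  unfolding uniform_fibres_def
proof (intro conjI ballI)
  show "(\<lambda>(f, a, b). (f, \<Theta> a, \<Theta> b)) ` (UNIV \<times> A \<times> A) \<subseteq> UNIV \<times> S \<times> S"
    using assms unfolding uniform_fibres_def by auto
next
  fix y
  assume "y \<in> UNIV \<times> S \<times> S"
  then obtain f s t where y: "y = (f, s, t)" "s \<in> S" "t \<in> S"
    by auto
  have "{x \<in> UNIV \<times> A \<times> A. (\<lambda>(f, a, b). (f, \<Theta> a, \<Theta> b)) x = y} =
      {f} \<times> {a \<in> A. \<Theta> a = s} \<times> {b \<in> A. \<Theta> b = t}"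
    using y by auto
  then show "card {x \<in> UNIV \<times> A \<times> A. (\<lambda>(f, a, b). (f, \<Theta> a, \<Theta> b)) x = y} = c * c"
    using assms y unfolding uniform_fibres_def by (simp add: card_cartesian_product)
qed

lemma card_eq_by_parametrisation:
  assumes "\<And>z. z \<in> F \<longleftrightarrow> (\<exists>v\<in>V. z = g v)" and "inj_on g V"
  shows "card F = card V"
proof -
  have "F = g ` V"
    using assms(1) by blast
  then show ?thesis
    using assms(2) by (simp add: card_image)
qed

lemma card_int_power_interval: "card {0..<(2::int) ^ k} = 2 ^ k"
  by (simp add: nat_power_eq)

section \<open>Gluing two elements of the previous level\<close>

definition Phi_compatible :: "int \<Rightarrow> int \<Rightarrow> nat \<Rightarrow> ('a \<Rightarrow> bool \<times> int) \<Rightarrow> bool \<times> 'a \<times> 'a \<Rightarrow> bool" where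
  "Phi_compatible p q k \<delta> = (\<lambda>(f, a, b). \<delta> a = Phi p q k (\<delta> b))"

lemma card_Phi_compatible:
  assumes "uniform_fibres \<delta> A D c" and "finite A"
    and "\<And>a. a \<in> A \<Longrightarrow> Phi p q k (\<delta> a) \<in> D"
  shows "card {z \<in> (UNIV :: bool set) \<times> A \<times> A. Phi_compatible p q k \<delta> z} = 2 * card A * c"
proof -
  let ?X = "{z \<in> (UNIV :: bool set) \<times> A \<times> A. Phi_compatible p q k \<delta> z}"
  have "uniform_fibres (\<lambda>(f, a, b). (f, b)) ?X (UNIV \<times> A) c"
    unfolding uniform_fibres_def
  proof (intro conjI ballI)
    show "(\<lambda>(f, a, b). (f, b)) ` ?X \<subseteq> UNIV \<times> A"
      by auto
  next
    fix y :: "bool \<times> _"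
    assume "y \<in> UNIV \<times> A"
    then obtain f b where y: "y = (f, b)" "b \<in> A"
      by auto
    have "{z \<in> ?X. (\<lambda>(f, a, b). (f, b)) z = y} =
        (\<lambda>a. (f, a, b)) ` {a \<in> A. \<delta> a = Phi p q k (\<delta> b)}"
      using y by (auto simp: Phi_compatible_def)
    also have "card \<dots> = c"
      using assms(1) assms(3)[OF y(2)] by (simp add: card_image inj_on_def uniform_fibres_def)
    finally show "card {z \<in> ?X. (\<lambda>(f, a, b). (f, b)) z = y} = c" .
  qed
  then show ?thesis
    using assms(2) uniform_fibres_card by (fastforce simp: card_cartesian_product)
qed

definition node_of :: "bool \<times> aut \<times> aut \<Rightarrow> aut" where
  "node_of = (\<lambda>(f, a, b). Node f a b)"

lemma inj_node_of: "inj_on node_of X"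
  unfolding node_of_def inj_on_def by auto

lemma autset_Suc_Suc: "autset (Suc (Suc k)) = node_of ` (UNIV \<times> autset (Suc k) \<times> autset (Suc k))"
  unfolding node_of_def by (force simp: image_iff)

lemma finite_autset: "finite (autset k)"
  by (induction k rule: autset.induct) (simp_all only: autset_Suc_Suc, auto)

lemma J_subset_autset: "J p q m \<subseteq> autset (Suc m)"
  by (cases "(p, q, m)" rule: J.cases) (auto simp: numeral_eq_Suc)

lemma finite_J: "finite (J p q m)"
  using finite_subset[OF J_subset_autset finite_autset] .

lemma J_Suc:
  assumes "m \<ge> 1"
  shows "J p q (Suc m) =
    node_of ` {z \<in> UNIV \<times> J p q m \<times> J p q m. Phi_compatible p q (m div 2) (Delta p q m) z}"
proof (cases "m = 1")
  case True
  \<comment> \<open>J_2 is defined by g_L = g_R; on Aut(T_2) this is Delta_1 g_L = Phi (Delta_1 g_R).\<close>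
  then show ?thesis
    by (auto simp: node_of_def Phi_compatible_def Phi_def numeral_eq_Suc image_iff)
next
  case False
  with assms have "\<exists>n. m = n + 2"
    by presburger
  then obtain n where "m = n + 2"
    by blast
  then show ?thesis
    using J_subset_autset[of p q m]
    by (auto simp: node_of_def Phi_compatible_def numeral_eq_Suc image_iff)
qed

lemma uniform_fibres_J_Suc:
  assumes "m \<ge> 1" and \<Theta>: "uniform_fibres \<Theta> (J p q m) S c" and "finite S"
    and Delta: "\<And>a. a \<in> J p q m \<Longrightarrow> Delta p q m a = \<delta> (\<Theta> a)"
    and glue: "\<And>f a b. a \<in> J p q m \<Longrightarrow> b \<in> J p q m \<Longrightarrow> \<Theta>' (Node f a b) = G (f, \<Theta> a, \<Theta> b)"
    and image: "G ` {z \<in> UNIV \<times> S \<times> S. Phi_compatible p q (m div 2) \<delta> z} \<subseteq> T"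
    and fibres: "\<And>w. w \<in> T \<Longrightarrow>
      card {z \<in> UNIV \<times> S \<times> S. Phi_compatible p q (m div 2) \<delta> z \<and> G z = w} = k"
  shows "uniform_fibres \<Theta>' (J p q (Suc m)) T (c * c * k)"
proof -
  let ?\<Theta>3 = "\<lambda>(f :: bool, a, b). (f, \<Theta> a, \<Theta> b)"
  let ?X = "{x \<in> UNIV \<times> J p q m \<times> J p q m. Phi_compatible p q (m div 2) \<delta> (?\<Theta>3 x)}"
  have "uniform_fibres (\<lambda>x. G (?\<Theta>3 x)) ?X T (c * c * k)"
    using uniform_fibres_map_prod[OF \<Theta>] finite_J \<open>finite S\<close> image fibres
    by (intro uniform_fibres_comp_restrict) auto
  then have "uniform_fibres (\<lambda>x. \<Theta>' (node_of x)) ?X T (c * c * k)"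
    by (rule uniform_fibres_cong) (auto simp: node_of_def glue)
  moreover have "J p q (Suc m) = node_of ` ?X"
    unfolding J_Suc[OF \<open>m \<ge> 1\<close>] using Delta by (auto simp: Phi_compatible_def)
  ultimately show ?thesis
    by (simp add: uniform_fibres_image inj_node_of)
qed

section \<open>The data carried by an element at even and odd levels\<close>

lemma psi_odd_level:
  "psi p q (2 * i + 3) g =
    zdivm (i + 1) (psi p q (2 * i + 2) (lft g) + psi p q (2 * i + 2) (rgt g)) (p + q)"
proof -
  have "2 * i + 3 = Suc (Suc (Suc (2 * i)))"
    by simp
  then show ?thesis
    by (simp only:) simp
qed

lemma psi_even_level:
  "psi p q (2 * i + 4) g =
    zdivm (i + 2) (2 * (psi p q (2 * i + 2) (lft (lft g)) + psi p q (2 * i + 2) (lft (rgt g)))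
      - (if fl (lft g) then (p + q) * (p - q) else 0)) ((p + q) ^ 2)"
proof -
  have "2 * i + 4 = Suc (Suc (Suc (Suc (2 * i))))"
    by simp
  then show ?thesis
    by (simp only:) simp
qed

lemma Delta_odd_level:
  "Delta p q (2 * i + 3) g =
    (fl g, (psi p q (2 * i + 2) (lft g) - psi p q (2 * i + 2) (rgt g)) mod 2 ^ (i + 1))"
proof -
  have "2 * i + 3 = Suc (Suc (Suc (2 * i)))"
    by simp
  then show ?thesis
    by (simp only:) simp
qed

lemma Delta_even_level:
  "Delta p q (2 * i + 4) g =
    (fl g, ((p + q) * psi p q (2 * i + 4) g - 2 * psi p q (2 * i + 3) (rgt g)) mod 2 ^ (i + 2))"
proof -
  have "2 * i + 4 = Suc (Suc (Suc (Suc (2 * i))))" "2 * i + 3 = Suc (Suc (Suc (2 * i)))"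
    by simp_all
  then show ?thesis
    by (simp only:) (simp del: psi.simps)
qed

definition even_codomain :: "nat \<Rightarrow> (bool \<times> int \<times> int) set" where
  "even_codomain i = UNIV \<times> {0..<2 ^ (i + 1)} \<times> {0..<2 ^ i}"

definition odd_codomain :: "nat \<Rightarrow> (bool \<times> int \<times> int) set" where
  "odd_codomain i = UNIV \<times> {0..<2 ^ (i + 1)} \<times> {0..<2 ^ (i + 1)}"

definition even_data :: "int \<Rightarrow> int \<Rightarrow> nat \<Rightarrow> aut \<Rightarrow> bool \<times> int \<times> int" where
  "even_data p q i g = (fl g, psi p q (2 * i + 2) g, psi p q (2 * i + 1) (rgt g))"

definition odd_data :: "int \<Rightarrow> int \<Rightarrow> nat \<Rightarrow> aut \<Rightarrow> bool \<times> int \<times> int" where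
  "odd_data p q i g = (fl g, psi p q (2 * i + 2) (lft g), psi p q (2 * i + 2) (rgt g))"

fun delta_even :: "int \<Rightarrow> int \<Rightarrow> nat \<Rightarrow> bool \<times> int \<times> int \<Rightarrow> bool \<times> int" where
  "delta_even p q i (h, u, w) = (h, ((p + q) * u - 2 * w) mod 2 ^ (i + 1))"

fun delta_odd :: "nat \<Rightarrow> bool \<times> int \<times> int \<Rightarrow> bool \<times> int" where
  "delta_odd i (h, x, y) = (h, (x - y) mod 2 ^ (i + 1))"

fun odd_glue :: "bool \<times> (bool \<times> int \<times> int) \<times> (bool \<times> int \<times> int) \<Rightarrow> bool \<times> int \<times> int" where
  "odd_glue (f, (h1, u1, w1), (h2, u2, w2)) = (f, u1, u2)"

fun even_glue :: "int \<Rightarrow> int \<Rightarrow> nat \<Rightarrow> bool \<times> (bool \<times> int \<times> int) \<times> (bool \<times> int \<times> int) \<Rightarrow> bool \<times> int \<times> int" where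
  "even_glue p q i (f, (h1, x1, y1), (h2, x2, y2)) =
     (f, zdivm (i + 2) (2 * (x1 + x2) - (if h1 then (p + q) * (p - q) else 0)) ((p + q) ^ 2),
      zdivm (i + 1) (x2 + y2) (p + q))"

lemma Delta_eq_delta_even_data:
  assumes "odd (p + q)"
  shows "Delta p q (2 * i + 2) g = delta_even p q i (even_data p q i g)"
proof (cases i)
  case 0
  have "((p + q) * psi p q 2 g) mod 2 = psi p q 2 g"
    using assms by (simp add: numeral_eq_Suc mod2_eq_if)
  moreover have "psi p q 1 (rgt g) = 0"
    by simp
  ultimately show ?thesis
    using 0 by (simp add: even_data_def numeral_eq_Suc del: psi.simps)
next
  case (Suc k)
  then have levels: "2 * i + 2 = 2 * k + 4" "2 * i + 1 = 2 * k + 3" "i + 1 = k + 2"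
    by simp_all
  show ?thesis
    unfolding even_data_def delta_even.simps levels Delta_even_level by simp
qed

lemma Delta_eq_delta_odd_data: "Delta p q (2 * i + 3) g = delta_odd i (odd_data p q i g)"
  by (simp add: odd_data_def Delta_odd_level)

lemma odd_data_Node: "odd_data p q i (Node f a b) = odd_glue (f, even_data p q i a, even_data p q i b)"
  by (simp add: odd_data_def even_data_def)

lemma even_data_Node:
  "even_data p q (Suc i) (Node f a b) = even_glue p q i (f, odd_data p q i a, odd_data p q i b)"
proof -
  have levels: "2 * Suc i + 2 = 2 * i + 4" "2 * Suc i + 1 = 2 * i + 3"
    by simp_all
  show ?thesis
    unfolding even_data_def odd_data_def levels psi_even_level psi_odd_level by simp
qed

lemma card_fibre_delta_even:
  assumes odd: "odd (p + q)" and d: "0 \<le> d" "d < 2 ^ (i + 1)"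
  shows "card {z \<in> even_codomain i. delta_even p q i z = (f, d)} = 2 ^ i"
proof -
  define M :: int where "M = 2 ^ (i + 1)"
  let ?g = "\<lambda>w. (f, zdivm (i + 1) (d + 2 * w) (p + q), w)"
  have "z \<in> {z \<in> even_codomain i. delta_even p q i z = (f, d)} \<longleftrightarrow> (\<exists>w\<in>{0..<2 ^ i}. z = ?g w)" for z
  proof -
    obtain h u w where z: "z = (h, u, w)"
      by (cases z)
    have "z \<in> {z \<in> even_codomain i. delta_even p q i z = (f, d)} \<longleftrightarrow>
        w \<in> {0..<2 ^ i} \<and> h = f \<and> 0 \<le> u \<and> u < M \<and> ((p + q) * u - 2 * w) mod M = d"
      by (auto simp: z even_codomain_def M_def)
    also have "\<dots> \<longleftrightarrow> w \<in> {0..<2 ^ i} \<and> h = f \<and> 0 \<le> u \<and> u < M \<and> M dvd (p + q) * u - (d + 2 * w)"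
      using mod_eq_iff_dvd[of M "(p + q) * u - 2 * w" d] d by (simp add: M_def algebra_simps)
    also have "\<dots> \<longleftrightarrow> w \<in> {0..<2 ^ i} \<and> h = f \<and> u = zdivm (i + 1) (d + 2 * w) (p + q)"
      using zdivm_eq_iff[OF odd, of "i + 1" "d + 2 * w" u] by (auto simp: M_def)
    also have "\<dots> \<longleftrightarrow> (\<exists>w\<in>{0..<2 ^ i}. z = ?g w)"
      by (auto simp: z)
    finally show ?thesis .
  qed
  moreover have "inj_on ?g {0..<2 ^ i}"
    by (auto simp: inj_on_def)
  ultimately show ?thesis
    by (simp add: card_eq_by_parametrisation card_int_power_interval)
qed

lemma card_fibre_delta_odd:
  assumes d: "0 \<le> d" "d < 2 ^ (i + 1)"
  shows "card {z \<in> odd_codomain i. delta_odd i z = (f, d)} = 2 ^ (i + 1)"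
proof -
  define M :: int where "M = 2 ^ (i + 1)"
  let ?g = "\<lambda>x. (f, x, (x - d) mod M)"
  have "z \<in> {z \<in> odd_codomain i. delta_odd i z = (f, d)} \<longleftrightarrow> (\<exists>x\<in>{0..<M}. z = ?g x)" for z
  proof -
    obtain h x y where z: "z = (h, x, y)"
      by (cases z)
    have "z \<in> {z \<in> odd_codomain i. delta_odd i z = (f, d)} \<longleftrightarrow>
        x \<in> {0..<M} \<and> h = f \<and> 0 \<le> y \<and> y < M \<and> (x - y) mod M = d"
      by (auto simp: z odd_codomain_def M_def)
    also have "\<dots> \<longleftrightarrow> x \<in> {0..<M} \<and> h = f \<and> 0 \<le> y \<and> y < M \<and> M dvd (x - d) - y"
      using mod_eq_iff_dvd[of M "x - y" d] d by (simp add: M_def algebra_simps)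
    also have "\<dots> \<longleftrightarrow> x \<in> {0..<M} \<and> h = f \<and> y = (x - d) mod M"
      using mod_eq_iff_dvd[of M "x - d" y] by (auto simp: M_def)
    also have "\<dots> \<longleftrightarrow> (\<exists>x\<in>{0..<M}. z = ?g x)"
      by (auto simp: z)
    finally show ?thesis .
  qed
  moreover have "inj_on ?g {0..<M}"
    by (auto simp: inj_on_def)
  ultimately show ?thesis
    by (simp add: card_eq_by_parametrisation card_int_power_interval M_def del: power_Suc)
qed

lemma Phi_compatible_delta_even_iff:
  "Phi_compatible p q (i + 1) (delta_even p q i) (f, (h1, u1, w1), (h2, u2, w2)) \<longleftrightarrow>
     h1 = h2 \<and> 2 ^ (i + 1) dvd ((p + q) * u1 - 2 * w1) + ((p + q) * u2 - 2 * w2)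
       - (if h2 then (p + q) * (p - q) else 0)"
  by (simp only: Phi_compatible_def prod.case delta_even.simps Phi_eq_iff_dvd)

lemma Phi_compatible_delta_odd_iff:
  "Phi_compatible p q (i + 1) (delta_odd i) (f, (h1, x1, y1), (h2, x2, y2)) \<longleftrightarrow>
     h1 = h2 \<and> 2 ^ (i + 1) dvd (x1 - y1) + (x2 - y2) - (if h2 then (p + q) * (p - q) else 0)"
  by (simp only: Phi_compatible_def prod.case delta_odd.simps Phi_eq_iff_dvd)

lemma card_fibre_odd_glue:
  assumes odd: "odd (p + q)" and xy: "(f0, x, y) \<in> odd_codomain i"
  shows "card {z \<in> UNIV \<times> even_codomain i \<times> even_codomain i.
      Phi_compatible p q (i + 1) (delta_even p q i) z \<and> odd_glue z = (f0, x, y)} = 2 ^ i"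
proof -
  define K :: int where "K = 2 ^ i"
  define t where "t = (p + q) * (p - q)"
  define E where "E = (\<lambda>h. (p + q) * (x + y) - (if h then t else 0))"
  define h0 where "h0 = odd (x + y)"
  let ?F = "{z \<in> UNIV \<times> even_codomain i \<times> even_codomain i.
      Phi_compatible p q (i + 1) (delta_even p q i) z \<and> odd_glue z = (f0, x, y)}"
  let ?g = "\<lambda>w. (f0, (h0, x, (E h0 div 2 - w) mod K), (h0, y, w))"
  have "odd t"
    using odd by (simp add: t_def even_diff)
  have "z \<in> ?F \<longleftrightarrow> (\<exists>w\<in>{0..<K}. z = ?g w)" for z
  proof -
    obtain f h1 x1 w1 h2 x2 w2 where z: "z = (f, (h1, x1, w1), (h2, x2, w2))"
      by (cases z) auto
    have "z \<in> ?F \<longleftrightarrow> w2 \<in> {0..<K} \<and> 0 \<le> w1 \<and> w1 < K \<and> f = f0 \<and> x1 = x \<and> x2 = y \<and>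
        Phi_compatible p q (i + 1) (delta_even p q i) (f, (h1, x, w1), (h2, y, w2))"
      using xy by (auto simp: z even_codomain_def odd_codomain_def K_def)
    also have "\<dots> \<longleftrightarrow> w2 \<in> {0..<K} \<and> 0 \<le> w1 \<and> w1 < K \<and> f = f0 \<and> x1 = x \<and> x2 = y \<and>
        h1 = h2 \<and> 2 * K dvd ((p + q) * x - 2 * w1) + ((p + q) * y - 2 * w2) - (if h2 then t else 0)"
      unfolding Phi_compatible_delta_even_iff by (simp add: K_def t_def)
    also have "\<dots> \<longleftrightarrow> w2 \<in> {0..<K} \<and> 0 \<le> w1 \<and> w1 < K \<and> f = f0 \<and> x1 = x \<and> x2 = y \<and>
        h1 = h2 \<and> even (E h2) \<and> K dvd E h2 div 2 - w2 - w1"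
      using double_dvd_diff_double_iff[of K "E h2" "w1 + w2"]
      by (simp add: E_def algebra_simps)
    also have "\<dots> \<longleftrightarrow> w2 \<in> {0..<K} \<and> f = f0 \<and> x1 = x \<and> x2 = y \<and>
        h1 = h0 \<and> h2 = h0 \<and> w1 = (E h0 div 2 - w2) mod K"
      using mod_eq_iff_dvd[of K "E h2 div 2 - w2" w1] odd \<open>odd t\<close>
      by (auto simp: K_def E_def h0_def even_diff)
    also have "\<dots> \<longleftrightarrow> (\<exists>w\<in>{0..<K}. z = ?g w)"
      by (auto simp: z)
    finally show ?thesis .
  qed
  moreover have "inj_on ?g {0..<K}"
    by (auto simp: inj_on_def)
  ultimately show ?thesis
    by (simp add: card_eq_by_parametrisation card_int_power_interval K_def)
qed

lemma even_glue_fibre_iff: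
  fixes p q U W :: int and i :: nat
  defines "M \<equiv> 2 ^ (i + 1) :: int"
    and "T \<equiv> if odd U then (p + q) * (p - q) else 0"
  defines "\<sigma> \<equiv> ((p + q) ^ 2 * U + T) div 2"
    and "\<tau> \<equiv> (p + q) * W"
  assumes odd: "odd (p + q)" and UW: "(f0, U, W) \<in> even_codomain (i + 1)"
  shows "(f, (h1, x1, y1), (h2, x2, y2)) \<in> UNIV \<times> odd_codomain i \<times> odd_codomain i \<and>
      Phi_compatible p q (i + 1) (delta_odd i) (f, (h1, x1, y1), (h2, x2, y2)) \<and>
      even_glue p q i (f, (h1, x1, y1), (h2, x2, y2)) = (f0, U, W) \<longleftrightarrow>
    x2 \<in> {0..<M} \<and> f = f0 \<and> h1 = odd U \<and> h2 = odd U \<and> x1 = (\<sigma> - x2) mod M \<and>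
      y1 = (\<sigma> - \<tau> + x2 - T) mod M \<and> y2 = (\<tau> - x2) mod M"
    (is "?lhs \<longleftrightarrow> ?rhs")
proof -
  define t where "t = (p + q) * (p - q)"
  have "odd t"
    using odd by (simp add: t_def even_diff)
  have "0 < M"
    by (simp add: M_def)
  have glue_U: "zdivm (i + 2) (2 * (x1 + x2) - (if h1 then t else 0)) ((p + q) ^ 2) = U \<longleftrightarrow>
      2 * M dvd ((p + q) ^ 2 * U + (if h1 then t else 0)) - 2 * (x1 + x2)"
    using zdivm_eq_iff[of "(p + q) ^ 2" "i + 2" _ U] odd UW
    by (simp add: M_def even_codomain_def algebra_simps)
  have glue_W: "zdivm (i + 1) (x2 + y2) (p + q) = W \<longleftrightarrow> M dvd \<tau> - (x2 + y2)"
    using zdivm_eq_iff[OF odd, of "i + 1" "x2 + y2" W] UW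
    by (simp add: M_def \<tau>_def even_codomain_def algebra_simps)
  have "?lhs \<longleftrightarrow> x1 \<in> {0..<M} \<and> y1 \<in> {0..<M} \<and> x2 \<in> {0..<M} \<and> y2 \<in> {0..<M} \<and> f = f0 \<and>
      h1 = h2 \<and> M dvd (x1 - y1) + (x2 - y2) - (if h2 then t else 0) \<and>
      2 * M dvd ((p + q) ^ 2 * U + (if h1 then t else 0)) - 2 * (x1 + x2) \<and>
      M dvd \<tau> - (x2 + y2)"
    unfolding Phi_compatible_delta_odd_iff even_glue.simps glue_U[symmetric] glue_W[symmetric]
    by (auto simp: odd_codomain_def M_def t_def)
  also have "\<dots> \<longleftrightarrow> x1 \<in> {0..<M} \<and> y1 \<in> {0..<M} \<and> x2 \<in> {0..<M} \<and> y2 \<in> {0..<M} \<and> f = f0 \<and>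
      h1 = odd U \<and> h2 = odd U \<and> M dvd (x1 - y1) + (x2 - y2) - T \<and>
      M dvd \<sigma> - x2 - x1 \<and> M dvd \<tau> - x2 - y2"
    using double_dvd_diff_double_iff[of M "(p + q) ^ 2 * U + (if h1 then t else 0)" "x1 + x2"] odd \<open>odd t\<close>
    by (auto simp: \<sigma>_def T_def t_def algebra_simps)
  also have "\<dots> \<longleftrightarrow> ?rhs"
  proof -
    have "(\<sigma> - \<tau> + x2 - T) - y1 = ((\<sigma> - x2 - x1) - (\<tau> - x2 - y2)) + ((x1 - y1) + (x2 - y2) - T)"
      by simp
    then have "M dvd \<sigma> - x2 - x1 \<Longrightarrow> M dvd \<tau> - x2 - y2 \<Longrightarrow>
        M dvd (x1 - y1) + (x2 - y2) - T \<longleftrightarrow> M dvd (\<sigma> - \<tau> + x2 - T) - y1"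
      by (metis dvd_add_right_iff dvd_diff)
    then show ?thesis
      using mod_eq_iff_dvd[OF \<open>0 < M\<close>, of "\<sigma> - x2" x1] mod_eq_iff_dvd[OF \<open>0 < M\<close>, of "\<tau> - x2" y2]
        mod_eq_iff_dvd[OF \<open>0 < M\<close>, of "\<sigma> - \<tau> + x2 - T" y1]
      by auto
  qed
  finally show ?thesis .
qed

lemma card_fibre_even_glue:
  assumes odd: "odd (p + q)" and UW: "(f0, U, W) \<in> even_codomain (i + 1)"
  shows "card {z \<in> UNIV \<times> odd_codomain i \<times> odd_codomain i.
      Phi_compatible p q (i + 1) (delta_odd i) z \<and> even_glue p q i z = (f0, U, W)} = 2 ^ (i + 1)"
proof -
  define M :: int where "M = 2 ^ (i + 1)"
  define T where "T = (if odd U then (p + q) * (p - q) else 0)"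
  define \<sigma> where "\<sigma> = ((p + q) ^ 2 * U + T) div 2"
  define \<tau> where "\<tau> = (p + q) * W"
  let ?g = "\<lambda>v. (f0, (odd U, (\<sigma> - v) mod M, (\<sigma> - \<tau> + v - T) mod M), (odd U, v, (\<tau> - v) mod M))"
  have "z \<in> {z \<in> UNIV \<times> odd_codomain i \<times> odd_codomain i.
      Phi_compatible p q (i + 1) (delta_odd i) z \<and> even_glue p q i z = (f0, U, W)} \<longleftrightarrow>
    (\<exists>v\<in>{0..<M}. z = ?g v)" for z
  proof -
    obtain f h1 x1 y1 h2 x2 y2 where z: "z = (f, (h1, x1, y1), (h2, x2, y2))"
      by (cases z) auto
    show ?thesis
      unfolding z mem_Collect_eq even_glue_fibre_iff[OF odd UW]
      unfolding M_def[symmetric] T_def[symmetric] \<sigma>_def[symmetric] \<tau>_def[symmetric]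
      by auto
  qed
  moreover have "inj_on ?g {0..<M}"
    by (auto simp: inj_on_def)
  ultimately show ?thesis
    by (simp add: card_eq_by_parametrisation card_int_power_interval M_def del: power_Suc)
qed

lemma uniform_fibres_odd_data_step:
  assumes odd: "odd (p + q)"
    and "uniform_fibres (even_data p q i) (J p q (2 * i + 2)) (even_codomain i) c"
  shows "uniform_fibres (odd_data p q i) (J p q (2 * i + 3)) (odd_codomain i) (c * c * 2 ^ i)"
proof -
  have "uniform_fibres (odd_data p q i) (J p q (Suc (2 * i + 2))) (odd_codomain i) (c * c * 2 ^ i)"
  proof (rule uniform_fibres_J_Suc[OF _ assms(2)])
    show "Delta p q (2 * i + 2) a = delta_even p q i (even_data p q i a)" for a
      by (rule Delta_eq_delta_even_data[OF odd])
    show "odd_glue ` {z \<in> UNIV \<times> even_codomain i \<times> even_codomain i.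
        Phi_compatible p q ((2 * i + 2) div 2) (delta_even p q i) z} \<subseteq> odd_codomain i"
      by (auto simp: even_codomain_def odd_codomain_def)
    show "card {z \<in> UNIV \<times> even_codomain i \<times> even_codomain i.
        Phi_compatible p q ((2 * i + 2) div 2) (delta_even p q i) z \<and> odd_glue z = w} = 2 ^ i"
      if "w \<in> odd_codomain i" for w
      using card_fibre_odd_glue[OF odd] that by (cases w) auto
  qed (auto simp: even_codomain_def odd_data_Node)
  then show ?thesis
    by (simp add: numeral_eq_Suc)
qed

lemma uniform_fibres_even_data_step:
  assumes odd: "odd (p + q)"
    and "uniform_fibres (odd_data p q i) (J p q (2 * i + 3)) (odd_codomain i) c"
  shows "uniform_fibres (even_data p q (Suc i)) (J p q (2 * Suc i + 2)) (even_codomain (Suc i))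
    (c * c * 2 ^ (i + 1))"
proof -
  have "uniform_fibres (even_data p q (Suc i)) (J p q (Suc (2 * i + 3))) (even_codomain (i + 1))
      (c * c * 2 ^ (i + 1))"
  proof (rule uniform_fibres_J_Suc[OF _ assms(2)])
    show "Delta p q (2 * i + 3) a = delta_odd i (odd_data p q i a)" for a
      by (rule Delta_eq_delta_odd_data)
    show "even_glue p q i ` {z \<in> UNIV \<times> odd_codomain i \<times> odd_codomain i.
        Phi_compatible p q ((2 * i + 3) div 2) (delta_odd i) z} \<subseteq> even_codomain (i + 1)"
      using zdivm_bounds[OF odd, of "i + 1"] zdivm_bounds[of "(p + q) ^ 2" "i + 2"] odd
      by (auto simp: even_codomain_def)
    show "card {z \<in> UNIV \<times> odd_codomain i \<times> odd_codomain i.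
        Phi_compatible p q ((2 * i + 3) div 2) (delta_odd i) z \<and> even_glue p q i z = w} = 2 ^ (i + 1)"
      if "w \<in> even_codomain (i + 1)" for w
      using card_fibre_even_glue[OF odd] that by (cases w) auto
  qed (auto simp: odd_codomain_def even_data_Node)
  moreover have "Suc (2 * i + 3) = 2 * Suc i + 2"
    by simp
  ultimately show ?thesis
    by simp
qed

lemma uniform_fibres_even_data_0: "uniform_fibres (even_data p q 0) (J p q 2) (even_codomain 0) 1"
proof -
  let ?N = "\<lambda>(f, e). Node f (Node e Leaf Leaf) (Node e Leaf Leaf)"
  have J2: "J p q 2 = ?N ` UNIV"
    by (auto simp: numeral_eq_Suc image_iff)
  have data:
    "even_data p q 0 (Node f (Node e Leaf Leaf) (Node e Leaf Leaf)) = (f, if e then 1 else 0, 0)" for f e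
    by (simp add: even_data_def numeral_eq_Suc)
  have "uniform_fibres (\<lambda>x. even_data p q 0 (?N x)) UNIV (even_codomain 0) 1"
    unfolding uniform_fibres_def
  proof (intro conjI ballI)
    show "(\<lambda>x. even_data p q 0 (?N x)) ` UNIV \<subseteq> even_codomain 0"
      by (auto simp: data even_codomain_def)
  next
    fix y
    assume "y \<in> even_codomain 0"
    then obtain f u w where y: "y = (f, u, w)" "0 \<le> u" "u < 2" "0 \<le> w" "w < 1"
      by (auto simp: even_codomain_def)
    then have "w = 0" "u = 0 \<or> u = 1"
      by auto
    then have "{x \<in> UNIV. even_data p q 0 (?N x) = y} = {(f, u = 1)}"
      using y by (auto simp: data split: if_splits)
    then show "card {x \<in> UNIV. even_data p q 0 (?N x) = y} = 1"
      by simp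
  qed
  then show ?thesis
    unfolding J2 by (rule uniform_fibres_image[rotated]) (auto simp: inj_on_def)
qed

lemma uniform_fibres_even_data:
  assumes "odd (p + q)"
  shows "\<exists>c. uniform_fibres (even_data p q i) (J p q (2 * i + 2)) (even_codomain i) c"
proof (induction i)
  case 0
  show ?case
    using uniform_fibres_even_data_0[of p q] unfolding mult_0_right add_0 by blast
next
  case (Suc i)
  then show ?case
    using uniform_fibres_odd_data_step[OF assms] uniform_fibres_even_data_step[OF assms] by blast
qed

lemma dihedral_power: "dihedral (2 ^ k) = UNIV \<times> {0..<2 ^ k}"
  by (simp add: dihedral_def)

lemma card_dihedral: "card (dihedral m) = 2 * m"
  by (simp add: dihedral_def card_cartesian_product)

lemma uniform_fibres_Delta_1: "uniform_fibres (Delta p q 1) (J p q 1) (UNIV \<times> {0..<1}) 1"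
proof -
  let ?N = "\<lambda>f. Node f Leaf Leaf"
  have "J p q 1 = ?N ` UNIV"
    by (auto simp: numeral_eq_Suc)
  moreover have "uniform_fibres (\<lambda>f. Delta p q 1 (?N f)) UNIV (UNIV \<times> {0..<1}) 1"
    by (auto simp: uniform_fibres_def)
  ultimately show ?thesis
    using uniform_fibres_image[of ?N UNIV "Delta p q 1"] by (simp add: inj_on_def)
qed

lemma uniform_fibres_Delta_even_level:
  assumes odd: "odd (p + q)"
  shows "\<exists>c. uniform_fibres (Delta p q (2 * i + 2)) (J p q (2 * i + 2)) (UNIV \<times> {0..<2 ^ (i + 1)}) c"
proof -
  obtain c where "uniform_fibres (even_data p q i) (J p q (2 * i + 2)) (even_codomain i) c"
    using uniform_fibres_even_data[OF odd] by blast
  then have "uniform_fibres (\<lambda>g. delta_even p q i (even_data p q i g)) (J p q (2 * i + 2))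
      (UNIV \<times> {0..<2 ^ (i + 1)}) (c * 2 ^ i)"
    using card_fibre_delta_even[OF odd] finite_J
    by (intro uniform_fibres_comp) (auto simp: even_codomain_def)
  then show ?thesis
    using uniform_fibres_cong Delta_eq_delta_even_data[OF odd] by metis
qed

lemma uniform_fibres_Delta_odd_level:
  assumes odd: "odd (p + q)"
  shows "\<exists>c. uniform_fibres (Delta p q (2 * i + 3)) (J p q (2 * i + 3)) (UNIV \<times> {0..<2 ^ (i + 1)}) c"
proof -
  obtain c where "uniform_fibres (odd_data p q i) (J p q (2 * i + 3)) (odd_codomain i) c"
    using uniform_fibres_odd_data_step[OF odd] uniform_fibres_even_data[OF odd] by blast
  then have "uniform_fibres (\<lambda>g. delta_odd i (odd_data p q i g)) (J p q (2 * i + 3))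
      (UNIV \<times> {0..<2 ^ (i + 1)}) (c * 2 ^ (i + 1))"
    using card_fibre_delta_odd finite_J
    by (intro uniform_fibres_comp) (auto simp: odd_codomain_def)
  then show ?thesis
    using uniform_fibres_cong Delta_eq_delta_odd_data by metis
qed

lemma uniform_fibres_Delta:
  assumes "odd (p + q)" and "m \<ge> 1"
  shows "\<exists>c. uniform_fibres (Delta p q m) (J p q m) (dihedral (2 ^ (m div 2))) c"
proof -
  have "m = 1 \<or> (\<exists>i. m = 2 * i + 2) \<or> (\<exists>i. m = 2 * i + 3)"
    using \<open>m \<ge> 1\<close> by presburger
  then show ?thesis
  proof (elim disjE exE)
    assume "m = 1"
    moreover have "dihedral (2 ^ (1 div 2)) = UNIV \<times> {0..<1}"
      by (simp add: dihedral_def)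
    ultimately show ?thesis
      using uniform_fibres_Delta_1 by metis
  next
    fix i
    assume "m = 2 * i + 2"
    moreover from this have "m div 2 = i + 1"
      by simp
    ultimately show ?thesis
      using uniform_fibres_Delta_even_level[OF assms(1)] dihedral_power by metis
  next
    fix i
    assume "m = 2 * i + 3"
    moreover from this have "m div 2 = i + 1"
      by simp
    ultimately show ?thesis
      using uniform_fibres_Delta_odd_level[OF assms(1)] dihedral_power by metis
  qed
qed

lemma card_J_Suc:
  assumes "odd (p + q)" and "m \<ge> 1"
  shows "card (J p q (Suc m)) * card (dihedral (2 ^ (m div 2))) = 2 * card (J p q m) ^ 2"
proof -
  obtain c where \<Delta>: "uniform_fibres (Delta p q m) (J p q m) (dihedral (2 ^ (m div 2))) c"
    using uniform_fibres_Delta[OF assms] by blast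
  have "card (J p q m) = card (dihedral (2 ^ (m div 2))) * c"
    by (rule uniform_fibres_card[OF \<Delta> finite_J]) (simp add: dihedral_def)
  moreover have "card (J p q (Suc m)) = 2 * card (J p q m) * c"
    unfolding J_Suc[OF \<open>m \<ge> 1\<close>] card_image[OF inj_node_of]
    by (rule card_Phi_compatible[OF \<Delta> finite_J]) (simp add: Phi_def dihedral_power)
  ultimately show ?thesis
    by (simp add: power2_eq_square)
qed

theorem lemma4:
  fixes p q :: int and n :: nat
  assumes "p > 0" and "q > 0" and "odd (p + q)" and "n \<ge> 2"
  shows "real (card (J p q n)) =
    2 * real (card (J p q (n - 1))) ^ 2 / real (card (dihedral (2 ^ ((n - 1) div 2))))"
proof -
  obtain m where n: "n = Suc m" and "m \<ge> 1"
    using assms(4) by (cases n) auto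
  have "real (card (J p q (Suc m)) * card (dihedral (2 ^ (m div 2)))) =
      real (2 * card (J p q m) ^ 2)"
    using card_J_Suc[OF assms(3) \<open>m \<ge> 1\<close>] by (simp only:)
  moreover have "card (dihedral (2 ^ (m div 2))) > 0"
    by (simp add: card_dihedral)
  ultimately show ?thesis
    unfolding n by (simp add: field_simps)
qed

end
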